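(* Let $\mathfrak R$ be either a cubical iterated graph system $\mathfrak R\subseteq\mathfrak R(d_*,L_*,s_* )$ (with $L_*$ its parameter), or the Sierpiński gasket or pentagonal Sierpiński carpet iterated graph system (with $L_*:=2$), and let $G_m$ be its replacement graphs. Then for all types $t$ of $\mathfrak R$ and all $m\in\mathbb N$, \[ d_{G_m}\!\left(I_{t,-}^{(m)},I_{t,+}^{(m)}\right)\ge\frac12\cdot L_*^m, \] where $I_{t,\star}^{(m)}:=(I_{t,\star})^m\subseteq W_m$ and $d_{G_m}(A,B)=\min\{d_{G_m}(a,b):a\in A,b\in B\}$.
   Context: Graphs: $(V,E)$, $V$ finite non-empty, $E\subseteq V\times V$, $(x,y)\in E\Rightarrow(y,x)\notin E$; $d_G$ is the shortest-path metric in the underlying undirected graph. An iterated graph system (IGS) $\mathfrak R$ consists of a connected graph $G_1=(S,E)$, a finite set $\mathcal T$ of types, a surjective typing $\mathfrak t:E\to\mathcal T$ and non-empty gluing rules $I_t\subseteq S\times S$; $I_{t,+}=\{w:(w,v)\in I_t\text{ for some }v\}$ and $I_{t,-}=\{v:(w,v)\in I_t\text{ for some }w\}$. With $W_m=S^m$, $[w]_k=w_1\cdots w_k$, the replacement graphs $G_m=(W_m,E_m)$ are defined recursively: $(w,v)\in E_{m+1}$ iff either (1) $[w]_m=[v]_m$ and $(w_{m+1},v_{m+1})\in E$ (type $\mathfrak t(w_{m+1},v_{m+1})$), or (2) $([w]_m,[v]_m)\in E_m$ and $(w_{m+1},v_{m+1})\in I_{\mathfrak t([w]_m,[v]_m)}$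 (type $\mathfrak t([w]_m,[v]_m)$). Mapping of IGS $\varphi:\mathfrak R\to\mathfrak R'$: graph mapping $G_1\to G_1'$ (edges to edges or collapsed) with (i) if $\varphi(w_1)=\varphi(v_1)$ for an edge $\{w_1,v_1\}$ of type $t$ then $\varphi(w_2)=\varphi(v_2)$ for all $(w_2,v_2)\in I_t$; (ii) if $(w_1,v_1)\in E$ has type $t$ and $(\varphi(w_1),\varphi(v_1))\in E'$ has type $t'$ then $(\varphi(w_2),\varphi(v_2))\in I'_{t'}$ for all $(w_2,v_2)\in I_t$; (iii) if $(w_1,v_1)\in E$ has type $t$ and $(\varphi(v_1),\varphi(w_1))\in E'$ has type $t'$ then $(\varphi(v_2),\varphi(w_2))\in I'_{t'}$ for all $(w_2,v_2)\in I_t$. Isomorphism of IGS: graph isomorphism with it and its inverse mappings of IGS; sub-system: $S\subseteq S'$, same types, inclusion a mapping of IGS. Cubical IGS: for integers $d_*\ge1,s_*\ge1,L_*\ge3$, $\mathfrak R(d_*,L_*,s_* )$ has symbols $\{1,\dots,L_*\}^{d_*}\times\{\underline1,\dots,\underline{s_*}\}$ with coordinates $c_i$ and sheet $s$; types $t_1,\dots,t_{d_*}$; $(w,v)$ is an edge of type $t_j$ iff $c_i(v)=c_i(w)$ ($i\ne j$), $c_j(v)=c_j(w)+1$; $(w,v)\in I_{t_j}$ iff $c_i(w)=c_i(v)$ ($i\ne j$), $(c_j(w),c_j(v))=(L_*,1)$, $s(w)=s(v)$. Sheet- and other-coordinate-preserving maps: $\eta_j:c_j\mapsto L_*+1-c_j$;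 $\alpha^+_{j,k}$ ($j\ne k$) swaps $c_j,c_k$; $\alpha^-_{j,k}$: $c_k\mapsto L_*+1-c_j$, $c_j\mapsto L_*+1-c_k$; $\mathcal G$ the set of these. A cubical IGS is a sub-system $\mathfrak R\subseteq\mathfrak R(d_*,L_*,s_* )$ with (C1) for each $j$, every symbol with $c_i\in\{1,L_*\}$ for all $i\ne j$ and sheet $\underline1$ (condition $(\ast_j)$) is in $S(\mathfrak R)$; (C2) if $w,v$ satisfy $(\ast_j)$, agree off coordinate $j$, and $c_j(v)=c_j(w)+1$, then $(w,v)\in E(\mathfrak R)$; (C3) if $w,v$ satisfy $(\ast_j)$, agree off coordinate $j$, and $(c_j(w),c_j(v))=(L_*,1)$, then $(w,v)\in I_{t_j}(\mathfrak R)$; (C4) each $\alpha\in\mathcal G$ restricts to an isomorphism of IGS $\mathfrak R\to\mathfrak R$. Sierpiński gasket: $S=\{0,1,2\}$, $E=\{(0,1),(1,2),(0,2)\}$ of types $a,b,c$, $I_a=\{(1,0)\}$, $I_b=\{(2,1)\}$, $I_c=\{(2,0)\}$. Pentagonal Sierpiński carpet: $S=\{0,\dots,4\}$, $E=\{(0,1),(1,2),(2,3),(3,4),(4,0)\}$ of types $a,b,c,d,e$, $I_a=\{(1,0),(2,4)\}$, $I_b=\{(2,1),(3,0)\}$, $I_c=\{(3,2),(4,1)\}$, $I_d=\{(4,3),(0,2)\}$, $I_e=\{(0,4),(1,3)\}$. *)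

theory Defs
  imports Main "HOL-Library.Extended_Real"
begin

text \<open>An IGS is given by a symbol set S, a directed edge set E, a typing
function typ (only its values on E matter; the set of types is typ ` E, so
the typing is surjective by construction) and gluing rules I.\<close>

definition IGS :: "'a set \<Rightarrow> ('a \<times> 'a) set \<Rightarrow> ('a \<times> 'a \<Rightarrow> 'b) \<Rightarrow> ('b \<Rightarrow> ('a \<times> 'a) set) \<Rightarrow> bool" where
  "IGS S E typ I \<longleftrightarrow>
     finite S \<and> S \<noteq> {} \<and> E \<subseteq> S \<times> S \<and>
     (\<forall>x y. (x, y) \<in> E \<longrightarrow> (y, x) \<notin> E) \<and>
     (\<forall>x\<in>S. \<forall>y\<in>S. (x, y) \<in> (E \<union> E\<inverse>)\<^sup>*) \<and>
     (\<forall>t\<in>typ ` E. I t \<noteq> {} \<and> I t \<subseteq> S \<times> S)"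

definition gluing_plus :: "('b \<Rightarrow> ('a \<times> 'a) set) \<Rightarrow> 'b \<Rightarrow> 'a set" where
  "gluing_plus I t = {w. \<exists>v. (w, v) \<in> I t}"

definition gluing_minus :: "('b \<Rightarrow> ('a \<times> 'a) set) \<Rightarrow> 'b \<Rightarrow> 'a set" where
  "gluing_minus I t = {v. \<exists>w. (w, v) \<in> I t}"

text \<open>Words of length m (w = w_1 ... w_m as a list; the prefix [w]_k is take k w).\<close>
definition words :: "'a set \<Rightarrow> nat \<Rightarrow> 'a list set" where
  "words S m = {w. length w = m \<and> set w \<subseteq> S}"

text \<open>Typed edges of the replacement graph G_m: triples (w, v, type).
igs_edges ... 0 is empty, which makes igs_edges ... 1 = G_1.\<close>
fun igs_edges :: "'a set \<Rightarrow> ('a \<times> 'a) set \<Rightarrow> ('a \<times> 'a \<Rightarrow> 'b) \<Rightarrow> ('b \<Rightarrow> ('a \<times> 'a) set)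
                   \<Rightarrow> nat \<Rightarrow> ('a list \<times> 'a list \<times> 'b) set" where
  "igs_edges S E typ I 0 = {}"
| "igs_edges S E typ I (Suc m) =
     {(w @ [a], w @ [b], typ (a, b)) | w a b. w \<in> words S m \<and> (a, b) \<in> E}
   \<union> {(w @ [a], v @ [b], t) | w v t a b. (w, v, t) \<in> igs_edges S E typ I m \<and> (a, b) \<in> I t}"

definition igs_graph_edges :: "'a set \<Rightarrow> ('a \<times> 'a) set \<Rightarrow> ('a \<times> 'a \<Rightarrow> 'b) \<Rightarrow> ('b \<Rightarrow> ('a \<times> 'a) set)
                   \<Rightarrow> nat \<Rightarrow> ('a list \<times> 'a list) set" where
  "igs_graph_edges S E typ I m = {(w, v). \<exists>t. (w, v, t) \<in> igs_edges S E typ I m}"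

definition graph_dist :: "'v set \<Rightarrow> ('v \<times> 'v) set \<Rightarrow> 'v \<Rightarrow> 'v \<Rightarrow> enat" where
  "graph_dist V F x y =
     (INF p \<in> {p. p \<noteq> [] \<and> hd p = x \<and> last p = y \<and> set p \<subseteq> V \<and>
                 successively (\<lambda>a b. (a, b) \<in> F \<or> (b, a) \<in> F) p}.
        enat (length p - 1))"

definition graph_setdist :: "'v set \<Rightarrow> ('v \<times> 'v) set \<Rightarrow> 'v set \<Rightarrow> 'v set \<Rightarrow> enat" where
  "graph_setdist V F A B = (INF a \<in> A. INF b \<in> B. graph_dist V F a b)"

definition igs_mapping ::
  "('a \<Rightarrow> 'c) \<Rightarrow> 'a set \<Rightarrow> ('a \<times> 'a) set \<Rightarrow> ('a \<times> 'a \<Rightarrow> 'b) \<Rightarrow> ('b \<Rightarrow> ('a \<times> 'a) set)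
     \<Rightarrow> 'c set \<Rightarrow> ('c \<times> 'c) set \<Rightarrow> ('c \<times> 'c \<Rightarrow> 'b) \<Rightarrow> ('b \<Rightarrow> ('c \<times> 'c) set) \<Rightarrow> bool" where
  "igs_mapping \<phi> S E typ I S' E' typ' I' \<longleftrightarrow>
     (\<forall>x\<in>S. \<phi> x \<in> S') \<and>
     (\<forall>(w, v)\<in>E. \<phi> w = \<phi> v \<or> (\<phi> w, \<phi> v) \<in> E' \<or> (\<phi> v, \<phi> w) \<in> E') \<and>
     (\<forall>(w1, v1)\<in>E. \<phi> w1 = \<phi> v1 \<longrightarrow>
        (\<forall>(w2, v2)\<in>I (typ (w1, v1)). \<phi> w2 = \<phi> v2)) \<and>
     (\<forall>(w1, v1)\<in>E. (\<phi> w1, \<phi> v1) \<in> E' \<longrightarrow>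
        (\<forall>(w2, v2)\<in>I (typ (w1, v1)). (\<phi> w2, \<phi> v2) \<in> I' (typ' (\<phi> w1, \<phi> v1)))) \<and>
     (\<forall>(w1, v1)\<in>E. (\<phi> v1, \<phi> w1) \<in> E' \<longrightarrow>
        (\<forall>(w2, v2)\<in>I (typ (w1, v1)). (\<phi> v2, \<phi> w2) \<in> I' (typ' (\<phi> v1, \<phi> w1))))"

definition graph_iso :: "('a \<Rightarrow> 'c) \<Rightarrow> 'a set \<Rightarrow> ('a \<times> 'a) set \<Rightarrow> 'c set \<Rightarrow> ('c \<times> 'c) set \<Rightarrow> bool" where
  "graph_iso \<phi> S E S' E' \<longleftrightarrow> bij_betw \<phi> S S' \<and>
     (\<forall>x\<in>S. \<forall>y\<in>S. ((x, y) \<in> E \<or> (y, x) \<in> E) \<longleftrightarrow> ((\<phi> x, \<phi> y) \<in> E' \<or> (\<phi> y, \<phi> x) \<in> E'))"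

definition igs_iso ::
  "('a \<Rightarrow> 'c) \<Rightarrow> 'a set \<Rightarrow> ('a \<times> 'a) set \<Rightarrow> ('a \<times> 'a \<Rightarrow> 'b) \<Rightarrow> ('b \<Rightarrow> ('a \<times> 'a) set)
     \<Rightarrow> 'c set \<Rightarrow> ('c \<times> 'c) set \<Rightarrow> ('c \<times> 'c \<Rightarrow> 'b) \<Rightarrow> ('b \<Rightarrow> ('c \<times> 'c) set) \<Rightarrow> bool" where
  "igs_iso \<phi> S E typ I S' E' typ' I' \<longleftrightarrow>
     graph_iso \<phi> S E S' E' \<and>
     igs_mapping \<phi> S E typ I S' E' typ' I' \<and>
     igs_mapping (inv_into S \<phi>) S' E' typ' I' S E typ I"

definition igs_subsystem ::
  "'a set \<Rightarrow> ('a \<times> 'a) set \<Rightarrow> ('a \<times> 'a \<Rightarrow> 'b) \<Rightarrow> ('b \<Rightarrow> ('a \<times> 'a) set)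
     \<Rightarrow> 'a set \<Rightarrow> ('a \<times> 'a) set \<Rightarrow> ('a \<times> 'a \<Rightarrow> 'b) \<Rightarrow> ('b \<Rightarrow> ('a \<times> 'a) set) \<Rightarrow> bool" where
  "igs_subsystem S E typ I S' E' typ' I' \<longleftrightarrow>
     IGS S E typ I \<and> S \<subseteq> S' \<and> typ ` E = typ' ` E' \<and>
     igs_mapping id S E typ I S' E' typ' I'"

text \<open>Symbols of R(d,L,s): (c, k) with c a list of d coordinates in {1..L}
(coordinate c_{j+1} is c ! j, indices 0-based) and sheet k in {1..s}.
Types t_1..t_d are encoded as 0..d-1.\<close>

type_synonym csym = "nat list \<times> nat"

definition cube_S :: "nat \<Rightarrow> nat \<Rightarrow> nat \<Rightarrow> csym set" where
  "cube_S d L s = {(c, k). length c = d \<and> set c \<subseteq> {1..L} \<and> k \<in> {1..s}}"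

definition agree_off :: "nat \<Rightarrow> nat \<Rightarrow> csym \<Rightarrow> csym \<Rightarrow> bool" where
  "agree_off d j w v \<longleftrightarrow> (\<forall>i<d. i \<noteq> j \<longrightarrow> fst v ! i = fst w ! i)"

definition cube_step :: "nat \<Rightarrow> nat \<Rightarrow> csym \<Rightarrow> csym \<Rightarrow> bool" where
  "cube_step d j w v \<longleftrightarrow> agree_off d j w v \<and> fst v ! j = fst w ! j + 1"

definition cube_E :: "nat \<Rightarrow> nat \<Rightarrow> nat \<Rightarrow> (csym \<times> csym) set" where
  "cube_E d L s = {(w, v). w \<in> cube_S d L s \<and> v \<in> cube_S d L s \<and> (\<exists>j<d. cube_step d j w v)}"

definition cube_typ :: "nat \<Rightarrow> csym \<times> csym \<Rightarrow> nat" where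
  "cube_typ d e = (LEAST j. j < d \<and> cube_step d j (fst e) (snd e))"

definition cube_I :: "nat \<Rightarrow> nat \<Rightarrow> nat \<Rightarrow> nat \<Rightarrow> (csym \<times> csym) set" where
  "cube_I d L s j = {(w, v). w \<in> cube_S d L s \<and> v \<in> cube_S d L s \<and> agree_off d j w v \<and>
                          fst w ! j = L \<and> fst v ! j = 1 \<and> snd w = snd v}"

definition cube_eta :: "nat \<Rightarrow> nat \<Rightarrow> csym \<Rightarrow> csym" where
  "cube_eta L j x = ((fst x)[j := L + 1 - fst x ! j], snd x)"

definition cube_alpha_plus :: "nat \<Rightarrow> nat \<Rightarrow> csym \<Rightarrow> csym" where
  "cube_alpha_plus j k x = ((fst x)[j := fst x ! k, k := fst x ! j], snd x)"

definition cube_alpha_minus :: "nat \<Rightarrow> nat \<Rightarrow> nat \<Rightarrow> csym \<Rightarrow> csym" where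
  "cube_alpha_minus L j k x = ((fst x)[k := L + 1 - fst x ! j, j := L + 1 - fst x ! k], snd x)"

definition cube_group :: "nat \<Rightarrow> nat \<Rightarrow> (csym \<Rightarrow> csym) set" where
  "cube_group d L = {cube_eta L j | j. j < d}
     \<union> {cube_alpha_plus j k | j k. j < d \<and> k < d \<and> j \<noteq> k}
     \<union> {cube_alpha_minus L j k | j k. j < d \<and> k < d \<and> j \<noteq> k}"

text \<open>Condition (*_j) (membership in the symbol set of R(d,L,s) is part of it).\<close>
definition cube_star :: "nat \<Rightarrow> nat \<Rightarrow> nat \<Rightarrow> nat \<Rightarrow> csym \<Rightarrow> bool" where
  "cube_star d L s j w \<longleftrightarrow> w \<in> cube_S d L s \<and>
     (\<forall>i<d. i \<noteq> j \<longrightarrow> fst w ! i \<in> {1, L}) \<and> snd w = 1"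

definition cubical_IGS ::
  "nat \<Rightarrow> nat \<Rightarrow> nat \<Rightarrow> csym set \<Rightarrow> (csym \<times> csym) set \<Rightarrow> (csym \<times> csym \<Rightarrow> nat)
     \<Rightarrow> (nat \<Rightarrow> (csym \<times> csym) set) \<Rightarrow> bool" where
  "cubical_IGS d L s S E typ I \<longleftrightarrow>
     d \<ge> 1 \<and> s \<ge> 1 \<and> L \<ge> 3 \<and>
     igs_subsystem S E typ I (cube_S d L s) (cube_E d L s) (cube_typ d) (cube_I d L s) \<and>
     (\<forall>j<d. \<forall>w. cube_star d L s j w \<longrightarrow> w \<in> S) \<and>
     (\<forall>j<d. \<forall>w v. cube_star d L s j w \<and> cube_star d L s j v \<and> agree_off d j w v \<and>
                fst v ! j = fst w ! j + 1 \<longrightarrow> (w, v) \<in> E) \<and>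
     (\<forall>j<d. \<forall>w v. cube_star d L s j w \<and> cube_star d L s j v \<and> agree_off d j w v \<and>
                fst w ! j = L \<and> fst v ! j = 1 \<longrightarrow> (w, v) \<in> I j) \<and>
     (\<forall>\<alpha>\<in>cube_group d L. igs_iso \<alpha> S E typ I S E typ I)"

section \<open>Sierpinski gasket and pentagonal carpet (types a,b,c,... encoded as 0,1,2,...)\<close>

definition gasket_S :: "nat set" where "gasket_S = {0, 1, 2}"
definition gasket_E :: "(nat \<times> nat) set" where "gasket_E = {(0, 1), (1, 2), (0, 2)}"
definition gasket_typ :: "nat \<times> nat \<Rightarrow> nat" where
  "gasket_typ e = (if e = (0, 1) then 0 else if e = (1, 2) then 1 else 2)"
definition gasket_I :: "nat \<Rightarrow> (nat \<times> nat) set" where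
  "gasket_I t = (if t = 0 then {(1, 0)} else if t = 1 then {(2, 1)} else if t = 2 then {(2, 0)} else {})"

definition pent_S :: "nat set" where "pent_S = {0, 1, 2, 3, 4}"
definition pent_E :: "(nat \<times> nat) set" where "pent_E = {(0, 1), (1, 2), (2, 3), (3, 4), (4, 0)}"
definition pent_typ :: "nat \<times> nat \<Rightarrow> nat" where
  "pent_typ e = fst e"
definition pent_I :: "nat \<Rightarrow> (nat \<times> nat) set" where
  "pent_I t = (if t = 0 then {(1, 0), (2, 4)} else if t = 1 then {(2, 1), (3, 0)}
     else if t = 2 then {(3, 2), (4, 1)} else if t = 3 then {(4, 3), (0, 2)}
     else if t = 4 then {(0, 4), (1, 3)} else {})"

end

theory Submission
  imports Defs
begin

(* A function on words that changes by at most one along every edge of G_m bounds the graph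
   distance from below, so it suffices to find such a potential that differs by at least
   L^m - 1 >= L^m / 2 between the two gluing sets.

   For cubical systems and the gasket the potential is linear: a word w_1 ... w_m is read as
   the base-L number with digits c(w_i), where c changes by at most one along the edges of
   G_1 (a coordinate of the cube symbols, resp. the indicator of a corner of the triangle).
   An edge of G_m either stays inside one copy x G_(m-1), or it joins x q to y q' along an
   edge (x, y) of G_1 of type t, with q and q' paired letterwise by I_t.  In the latter case
   the gluing rules make the digits of q and q' differ by (L - 1) (c y - c x) each, which
   adds up to (L^(m-1) - 1) (c y - c x) and cancels the change of the leading digit up to
   c y - c x.  Likewise each digit on one gluing set exceeds each digit on the other by the
   same amount +-(L - 1), so their values differ by L^m - 1.

   The pentagonal carpet admits no such linear potential.  There one uses instead a
   recursively defined lower bound for the distance to a side of the pentagon, which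
   vanishes on that side and is at least 2^m - 1 on the two sides not adjacent to it. *)

lemma walk_lipschitz_bound:
  fixes f :: "'v \<Rightarrow> int"
  assumes lip: "\<And>x y. (x, y) \<in> F \<Longrightarrow> \<bar>f x - f y\<bar> \<le> 1"
    and walk: "successively (\<lambda>a b. (a, b) \<in> F \<or> (b, a) \<in> F) p" and "p \<noteq> []"
  shows "\<bar>f (last p) - f (hd p)\<bar> \<le> int (length p - 1)"
  using walk \<open>p \<noteq> []\<close>
proof (induction p rule: induct_list012)
  case (3 a b p)
  have "(a, b) \<in> F \<or> (b, a) \<in> F"
    and walk': "successively (\<lambda>a b. (a, b) \<in> F \<or> (b, a) \<in> F) (b # p)"
    using "3.prems"(1) by simp_all
  then have "\<bar>f b - f a\<bar> \<le> 1"
    using lip[of a b] lip[of b a] by (auto simp: abs_le_iff)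
  moreover have "\<bar>f (last (b # p)) - f b\<bar> \<le> int (length p)"
    using "3.IH"(2)[OF walk'] by simp
  ultimately show ?case
    by (simp add: abs_le_iff)
qed simp_all

lemma graph_setdist_ge_by_lipschitz:
  fixes f :: "'v \<Rightarrow> int"
  assumes lip: "\<And>x y. (x, y) \<in> F \<Longrightarrow> \<bar>f x - f y\<bar> \<le> 1"
    and sep: "\<And>a b. a \<in> A \<Longrightarrow> b \<in> B \<Longrightarrow> int K \<le> \<bar>f a - f b\<bar>"
  shows "enat K \<le> graph_setdist V F A B"
  unfolding graph_setdist_def graph_dist_def
proof (intro INF_greatest, clarify)
  fix p assume p: "p \<noteq> []" "hd p \<in> A" "last p \<in> B"
    and walk: "successively (\<lambda>a b. (a, b) \<in> F \<or> (b, a) \<in> F) p"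
  have "int K \<le> \<bar>f (last p) - f (hd p)\<bar>"
    using sep[OF p(2,3)] by (simp add: abs_minus_commute)
  also have "\<dots> \<le> int (length p - 1)"
    using walk_lipschitz_bound[OF lip walk p(1)] .
  finally show "enat K \<le> enat (length p - 1)" by simp
qed

lemma ereal_half_power_le:
  fixes L m :: nat
  assumes "enat (L ^ m - 1) \<le> X" "2 \<le> L" "1 \<le> m"
  shows "ereal (real L ^ m / 2) \<le> ereal_of_enat X"
proof -
  have "2 \<le> L ^ m"
    using power_increasing[of 1 m L] assms(2,3) by simp
  then have "real L ^ m / 2 \<le> real (L ^ m - 1)"
    by (simp add: of_nat_diff flip: of_nat_power)
  then have "ereal (real L ^ m / 2) \<le> ereal_of_enat (enat (L ^ m - 1))"
    by simp
  also have "\<dots> \<le> ereal_of_enat X"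
    using assms(1) ereal_of_enat_le_iff by blast
  finally show ?thesis .
qed

lemma igs_edges_length:
  "(w, v, t) \<in> igs_edges S E typ I m \<Longrightarrow> length w = m \<and> length v = m"
proof (induction m arbitrary: w v t)
  case (Suc m)
  then show ?case
    by (subst (asm) igs_edges.simps) (fastforce simp: words_def)
qed simp

lemma igs_edges_Suc_innerI:
  "w \<in> words S m \<Longrightarrow> (a, b) \<in> E \<Longrightarrow>
    (w @ [a], w @ [b], typ (a, b)) \<in> igs_edges S E typ I (Suc m)"
  by (subst igs_edges.simps) blast

lemma igs_edges_Suc_glueI:
  "(w, v, t) \<in> igs_edges S E typ I m \<Longrightarrow> (a, b) \<in> I t \<Longrightarrow>
    (w @ [a], v @ [b], t) \<in> igs_edges S E typ I (Suc m)"
  by (subst igs_edges.simps) blast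

(* The defining recursion of G_(m+1) appends a last letter; this rule decomposes it instead
   along the first letter, into copies x G_m glued along the edges (x, y) of G_1. *)
lemma igs_edges_SucE:
  assumes "(w', v', t) \<in> igs_edges S E typ I (Suc m)"
  obtains (copy) x w v where "w' = x # w" "v' = x # v" "(w, v, t) \<in> igs_edges S E typ I m"
    | (glue) x y q q' where "w' = x # q" "v' = y # q'" "(x, y) \<in> E" "t = typ (x, y)"
        "list_all2 (\<lambda>a b. (a, b) \<in> I t) q q'"
  using assms
proof (induction m arbitrary: w' v' t thesis)
  case 0
  from "0.prems"(3) obtain a b where "w' = [a]" "v' = [b]" "(a, b) \<in> E" "t = typ (a, b)"
    by (subst (asm) igs_edges.simps) (auto simp: words_def)
  then show ?case
    using "0.prems"(2)[of a "[]" b "[]"] by simp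
next
  case (Suc m)
  from Suc.prems(3) consider
    (inner) w0 a b where "w' = w0 @ [a]" "v' = w0 @ [b]" "t = typ (a, b)" "(a, b) \<in> E"
      "w0 \<in> words S (Suc m)"
  | (gl) w0 v0 a b where "w' = w0 @ [a]" "v' = v0 @ [b]" "(w0, v0, t) \<in> igs_edges S E typ I (Suc m)"
      "(a, b) \<in> I t"
    by (subst (asm) igs_edges.simps) blast
  then show ?case
  proof cases
    case inner
    then obtain x w1 where w0: "w0 = x # w1" and w1: "w1 \<in> words S m"
      by (cases w0) (auto simp: words_def)
    have "(w1 @ [a], w1 @ [b], t) \<in> igs_edges S E typ I (Suc m)"
      using igs_edges_Suc_innerI[OF w1 inner(4)] inner(3) by simp
    then show ?thesis
      using Suc.prems(1)[of x "w1 @ [a]" "w1 @ [b]"] inner(1,2) w0 by simp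
  next
    case gl
    show ?thesis
    proof (rule Suc.IH)
      fix x w v assume "w0 = x # w" "v0 = x # v" and wv: "(w, v, t) \<in> igs_edges S E typ I m"
      then show ?thesis
        using Suc.prems(1)[of x "w @ [a]" "v @ [b]"] igs_edges_Suc_glueI[OF wv gl(4)] gl(1,2)
        by simp
    next
      fix x y q q' assume "w0 = x # q" "v0 = y # q'" "(x, y) \<in> E" "t = typ (x, y)"
        "list_all2 (\<lambda>a b. (a, b) \<in> I t) q q'"
      then show ?thesis
        using Suc.prems(2)[of x "q @ [a]" y "q' @ [b]"] gl by (simp add: list_all2_appendI)
    qed (rule gl(3))
  qed
qed

section \<open>Linear potentials\<close>

primrec base_value :: "int \<Rightarrow> ('a \<Rightarrow> int) \<Rightarrow> 'a list \<Rightarrow> int" where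
  "base_value L c [] = 0"
| "base_value L c (a # w) = c a * L ^ length w + base_value L c w"

definition linear_potential ::
  "int \<Rightarrow> ('a \<Rightarrow> int) \<Rightarrow> ('a \<times> 'a) set \<Rightarrow> ('a \<times> 'a \<Rightarrow> 'b) \<Rightarrow> ('b \<Rightarrow> ('a \<times> 'a) set)
     \<Rightarrow> bool" where
  "linear_potential L c E typ I \<longleftrightarrow>
     (\<forall>(x, y)\<in>E. \<bar>c y - c x\<bar> \<le> 1 \<and>
        (\<forall>(a, b)\<in>I (typ (x, y)). c a - c b = (L - 1) * (c y - c x)))"

lemma base_value_diff_uniform:
  assumes "list_all2 (\<lambda>a b. c a - c b = (L - 1) * \<delta>) u u'"
  shows "base_value L c u - base_value L c u' = \<delta> * (L ^ length u - 1)"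
  using assms
proof (induction rule: list_all2_induct)
  case (Cons a u b u')
  have "length u' = length u"
    using Cons.hyps(2) by (simp add: list_all2_lengthD)
  then have "base_value L c (a # u) - base_value L c (b # u')
      = (c a - c b) * L ^ length u + (base_value L c u - base_value L c u')"
    by (simp add: algebra_simps)
  also have "\<dots> = (L - 1) * \<delta> * L ^ length u + \<delta> * (L ^ length u - 1)"
    using Cons by simp
  also have "\<dots> = \<delta> * (L ^ length (a # u) - 1)"
    by (simp add: algebra_simps)
  finally show ?case .
qed simp

lemma base_value_igs_edge:
  assumes pot: "linear_potential L c E typ I"
  shows "(w, v, t) \<in> igs_edges S E typ I m \<Longrightarrow>
    \<exists>(x, y)\<in>E. base_value L c v - base_value L c w = c y - c x"
proof (induction m arbitrary: w v t)
  case (Suc m)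
  from Suc.prems show ?case
  proof (cases rule: igs_edges_SucE)
    case (copy x u u')
    then have "length u = length u'"
      using igs_edges_length[OF copy(3)] by simp
    with copy Suc.IH show ?thesis
      by simp
  next
    case (glue x y q q')
    have "length q = m"
      using igs_edges_length[OF Suc.prems] glue(1) by simp
    have glued: "\<forall>(a, b)\<in>I t. c a - c b = (L - 1) * (c y - c x)"
      using pot glue(3,4) unfolding linear_potential_def by blast
    from glue(5) have "list_all2 (\<lambda>a b. c a - c b = (L - 1) * (c y - c x)) q q'"
      by (rule list_all2_mono) (use glued in blast)
    then have "base_value L c q - base_value L c q' = (c y - c x) * (L ^ m - 1)"
      using base_value_diff_uniform \<open>length q = m\<close> by blast
    moreover have "length q' = m"
      using \<open>length q = m\<close> glue(5) by (simp add: list_all2_lengthD)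
    ultimately have "base_value L c v - base_value L c w = c y - c x"
      using glue(1,2) \<open>length q = m\<close> by (simp add: algebra_simps)
    with glue(3) show ?thesis
      by blast
  qed
qed simp

lemma base_value_lipschitz_on_igs_graph:
  assumes pot: "linear_potential L c E typ I"
    and edge: "(w, v) \<in> igs_graph_edges S E typ I m"
  shows "\<bar>base_value L c w - base_value L c v\<bar> \<le> 1"
proof -
  obtain t where "(w, v, t) \<in> igs_edges S E typ I m"
    using edge by (auto simp: igs_graph_edges_def)
  from base_value_igs_edge[OF pot this] obtain x y
    where "(x, y) \<in> E" and diff: "base_value L c v - base_value L c w = c y - c x"
    by blast
  have "\<bar>base_value L c w - base_value L c v\<bar> = \<bar>c y - c x\<bar>"
    using diff by (simp add: abs_minus_commute)
  also have "\<dots> \<le> 1"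
    using pot \<open>(x, y) \<in> E\<close> unfolding linear_potential_def by blast
  finally show ?thesis .
qed

lemma igs_setdist_ge_by_linear_potential:
  fixes L :: nat and c :: "'a \<Rightarrow> int" and \<delta> :: int
  assumes pot: "linear_potential (int L) c E typ I"
    and sep: "\<And>a b. a \<in> P \<Longrightarrow> b \<in> M \<Longrightarrow> c a - c b = (int L - 1) * \<delta>"
    and "\<bar>\<delta>\<bar> = 1" "1 \<le> L"
  shows "enat (L ^ m - 1) \<le> graph_setdist V (igs_graph_edges S E typ I m) (words M m) (words P m)"
proof (rule graph_setdist_ge_by_lipschitz[where f = "base_value (int L) c"])
  fix x y assume "(x, y) \<in> igs_graph_edges S E typ I m"
  with pot show "\<bar>base_value (int L) c x - base_value (int L) c y\<bar> \<le> 1"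
    by (rule base_value_lipschitz_on_igs_graph)
next
  fix a b assume a: "a \<in> words M m" and b: "b \<in> words P m"
  have "list_all2 (\<lambda>x y. c x - c y = (int L - 1) * \<delta>) b a"
    using a b sep by (auto simp: words_def list_all2_conv_all_nth subset_iff)
  from base_value_diff_uniform[OF this]
  have "base_value (int L) c b - base_value (int L) c a = \<delta> * (int L ^ m - 1)"
    using b by (simp add: words_def)
  then have "base_value (int L) c a - base_value (int L) c b = - (\<delta> * (int L ^ m - 1))"
    by simp
  then have "\<bar>base_value (int L) c a - base_value (int L) c b\<bar> = \<bar>\<delta>\<bar> * \<bar>int L ^ m - 1\<bar>"
    by (simp add: abs_mult)
  also have "\<dots> = int (L ^ m - 1)"
    using \<open>\<bar>\<delta>\<bar> = 1\<close> \<open>1 \<le> L\<close> by (simp add: of_nat_diff)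
  finally show "int (L ^ m - 1) \<le> \<bar>base_value (int L) c a - base_value (int L) c b\<bar>"
    by simp
qed

section \<open>Cubical iterated graph systems\<close>

lemma igs_mappingD:
  assumes "igs_mapping \<phi> S E typ I S' E' typ' I'" and "(w1, v1) \<in> E"
  shows igs_mapping_edge: "\<phi> w1 = \<phi> v1 \<or> (\<phi> w1, \<phi> v1) \<in> E' \<or> (\<phi> v1, \<phi> w1) \<in> E'"
    and igs_mapping_gluing: "(\<phi> w1, \<phi> v1) \<in> E' \<Longrightarrow> (w2, v2) \<in> I (typ (w1, v1)) \<Longrightarrow>
      (\<phi> w2, \<phi> v2) \<in> I' (typ' (\<phi> w1, \<phi> v1))"
    and igs_mapping_gluing_rev: "(\<phi> v1, \<phi> w1) \<in> E' \<Longrightarrow> (w2, v2) \<in> I (typ (w1, v1)) \<Longrightarrow>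
      (\<phi> v2, \<phi> w2) \<in> I' (typ' (\<phi> v1, \<phi> w1))"
  using assms unfolding igs_mapping_def by fast+

lemma gluing_sides_const:
  assumes "\<And>a b. (a, b) \<in> I t \<Longrightarrow> f a = \<alpha> \<and> f b = \<beta>"
  shows "a \<in> gluing_plus I t \<Longrightarrow> f a = \<alpha>" and "b \<in> gluing_minus I t \<Longrightarrow> f b = \<beta>"
  using assms unfolding gluing_plus_def gluing_minus_def by blast+

lemma cube_E_imp_step:
  assumes "(x, y) \<in> cube_E d L s"
  shows "cube_typ d (x, y) < d \<and> cube_step d (cube_typ d (x, y)) x y"
proof -
  have "\<exists>j. j < d \<and> cube_step d j x y"
    using assms by (auto simp: cube_E_def)
  from LeastI_ex[OF this] show ?thesis
    by (simp add: cube_typ_def)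
qed

lemma cube_step_coord:
  "cube_step d j x y \<Longrightarrow> k < d \<Longrightarrow>
    int (fst y ! k) - int (fst x ! k) = (if k = j then 1 else 0)"
  by (auto simp: cube_step_def agree_off_def)

lemma cube_I_coord:
  "(a, b) \<in> cube_I d L s j \<Longrightarrow> k < d \<Longrightarrow>
    int (fst a ! k) - int (fst b ! k) = (if k = j then int L - 1 else 0)"
  by (auto simp: cube_I_def agree_off_def)

lemma cubical_IGS_edgeE:
  assumes cub: "cubical_IGS d L s S E typ I" and xy: "(x, y) \<in> E"
  obtains (forward) j where "j < d" "cube_step d j x y"
      "\<And>a b. (a, b) \<in> I (typ (x, y)) \<Longrightarrow> (a, b) \<in> cube_I d L s j"
    | (backward) j where "j < d" "cube_step d j y x"
      "\<And>a b. (a, b) \<in> I (typ (x, y)) \<Longrightarrow> (b, a) \<in> cube_I d L s j"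
proof -
  have map: "igs_mapping id S E typ I (cube_S d L s) (cube_E d L s) (cube_typ d) (cube_I d L s)"
    and "IGS S E typ I"
    using cub by (simp_all add: cubical_IGS_def igs_subsystem_def)
  then have "x \<noteq> y"
    using xy unfolding IGS_def by blast
  then consider "(x, y) \<in> cube_E d L s" | "(y, x) \<in> cube_E d L s"
    using igs_mapping_edge[OF map xy] by auto
  then show ?thesis
  proof cases
    case 1
    with cube_E_imp_step show ?thesis
      using igs_mapping_gluing[OF map xy] by (intro forward[of "cube_typ d (x, y)"]) auto
  next
    case 2
    with cube_E_imp_step show ?thesis
      using igs_mapping_gluing_rev[OF map xy] by (intro backward[of "cube_typ d (y, x)"]) auto
  qed
qed

lemma cubical_IGS_coord_linear_potential:
  assumes cub: "cubical_IGS d L s S E typ I" and "k < d"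
  shows "linear_potential (int L) (\<lambda>z. int (fst z ! k)) E typ I"
  unfolding linear_potential_def
proof (clarify)
  fix x y assume "(x, y) \<in> E"
  with cub show "\<bar>int (fst y ! k) - int (fst x ! k)\<bar> \<le> 1 \<and>
    (\<forall>(a, b)\<in>I (typ (x, y)). int (fst a ! k) - int (fst b ! k)
       = (int L - 1) * (int (fst y ! k) - int (fst x ! k)))"
  proof (cases rule: cubical_IGS_edgeE)
    case (forward j)
    have "int (fst a ! k) - int (fst b ! k) = (int L - 1) * (int (fst y ! k) - int (fst x ! k))"
      if "(a, b) \<in> I (typ (x, y))" for a b
      using cube_step_coord[OF forward(2) \<open>k < d\<close>]
        cube_I_coord[OF forward(3)[OF that] \<open>k < d\<close>]
      by simp
    moreover have "\<bar>int (fst y ! k) - int (fst x ! k)\<bar> \<le> 1"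
      using cube_step_coord[OF forward(2) \<open>k < d\<close>] by simp
    ultimately show ?thesis
      by fast
  next
    case (backward j)
    have "int (fst a ! k) - int (fst b ! k) = (int L - 1) * (int (fst y ! k) - int (fst x ! k))"
      if "(a, b) \<in> I (typ (x, y))" for a b
      using cube_step_coord[OF backward(2) \<open>k < d\<close>]
        cube_I_coord[OF backward(3)[OF that] \<open>k < d\<close>]
      by (simp add: algebra_simps split: if_splits)
    moreover have "\<bar>int (fst y ! k) - int (fst x ! k)\<bar> \<le> 1"
      using cube_step_coord[OF backward(2) \<open>k < d\<close>] by (simp split: if_splits)
    ultimately show ?thesis
      by fast
  qed
qed

lemma cubical_IGS_gluing_coord:
  assumes cub: "cubical_IGS d L s S E typ I" and "t \<in> typ ` E"
  obtains j \<delta> where "j < d" "\<bar>\<delta>\<bar> = 1"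
    "\<And>a b. a \<in> gluing_plus I t \<Longrightarrow> b \<in> gluing_minus I t \<Longrightarrow>
       int (fst a ! j) - int (fst b ! j) = (int L - 1) * \<delta>"
proof -
  obtain x y where xy: "(x, y) \<in> E" and t: "t = typ (x, y)"
    using \<open>t \<in> typ ` E\<close> by auto
  from cub xy show ?thesis
  proof (cases rule: cubical_IGS_edgeE)
    case (forward j)
    have "fst a ! j = L \<and> fst b ! j = 1" if "(a, b) \<in> I t" for a b
      using forward(3)[of a b] that t by (simp add: cube_I_def)
    note gluing_sides_const[where I = I and t = t and f = "\<lambda>z. fst z ! j", OF this]
    then show ?thesis
      using that[of j 1] forward(1) by simp
  next
    case (backward j)
    have "fst a ! j = 1 \<and> fst b ! j = L" if "(a, b) \<in> I t" for a b
      using backward(3)[of a b] that t by (simp add: cube_I_def)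
    note gluing_sides_const[where I = I and t = t and f = "\<lambda>z. fst z ! j", OF this]
    then show ?thesis
      using that[of j "-1"] backward(1) by simp
  qed
qed

lemma cubical_IGS_gluing_setdist_ge:
  assumes cub: "cubical_IGS d L s S E typ I" and "t \<in> typ ` E"
  shows "enat (L ^ m - 1) \<le> graph_setdist (words S m) (igs_graph_edges S E typ I m)
    (words (gluing_minus I t) m) (words (gluing_plus I t) m)"
proof -
  obtain j \<delta> where j: "j < d" and "\<bar>\<delta>\<bar> = 1" and sep:
    "\<And>a b. a \<in> gluing_plus I t \<Longrightarrow> b \<in> gluing_minus I t \<Longrightarrow>
       int (fst a ! j) - int (fst b ! j) = (int L - 1) * \<delta>"
    using cubical_IGS_gluing_coord[OF assms] by blast
  have "1 \<le> L"
    using cub by (simp add: cubical_IGS_def)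
  show ?thesis
    using cubical_IGS_coord_linear_potential[OF cub j] sep \<open>\<bar>\<delta>\<bar> = 1\<close> \<open>1 \<le> L\<close>
    by (rule igs_setdist_ge_by_linear_potential)
qed

section \<open>The Sierpinski gasket\<close>

lemma gasket_I_typ: "(x, y) \<in> gasket_E \<Longrightarrow> gasket_I (gasket_typ (x, y)) = {(y, x)}"
  by (auto simp: gasket_E_def gasket_I_def gasket_typ_def)

lemma gasket_linear_potential:
  assumes "\<And>x y. (x, y) \<in> gasket_E \<Longrightarrow> \<bar>c y - c x\<bar> \<le> 1"
  shows "linear_potential 2 c gasket_E gasket_typ gasket_I"
  unfolding linear_potential_def using assms by (auto simp: gasket_I_typ)

lemma gasket_gluing_setdist_ge:
  assumes "t \<in> gasket_typ ` gasket_E"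
  shows "enat (2 ^ m - 1) \<le> graph_setdist (words gasket_S m)
    (igs_graph_edges gasket_S gasket_E gasket_typ gasket_I m)
    (words (gluing_minus gasket_I t) m) (words (gluing_plus gasket_I t) m)"
proof -
  obtain x y where xy: "(x, y) \<in> gasket_E" and t: "t = gasket_typ (x, y)"
    using assms by auto
  have "x \<noteq> y"
    using xy by (auto simp: gasket_E_def)
  have sides: "gluing_minus gasket_I t = {x}" "gluing_plus gasket_I t = {y}"
    using gasket_I_typ[OF xy] t by (auto simp: gluing_minus_def gluing_plus_def)
  define c where "c z = (if z = y then 1 else 0 :: int)" for z
  have "linear_potential (int 2) c gasket_E gasket_typ gasket_I"
    using gasket_linear_potential[of c] by (simp add: c_def)
  then show ?thesis
    unfolding sides
    by (rule igs_setdist_ge_by_linear_potential[where \<delta> = 1])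
      (use \<open>x \<noteq> y\<close> in \<open>auto simp: c_def\<close>)
qed

section \<open>The pentagonal Sierpinski carpet\<close>

lemma less_5_cases:
  assumes "(a::nat) < 5"
  obtains "a = 0" | "a = 1" | "a = 2" | "a = 3" | "a = 4"
  using assms by linarith

definition pent_side :: "nat \<Rightarrow> nat set" where
  "pent_side c = {c mod 5, Suc c mod 5}"

definition pent_far :: "nat \<Rightarrow> nat \<Rightarrow> bool" where
  "pent_far a c \<longleftrightarrow> (c + 5 - a) mod 5 = 2 \<or> (c + 5 - a) mod 5 = 3"

(* pent_pot a w is a lower bound for the distance in G_m from w to the side of the pentagon
   between the corners a and a+1, i.e. to the words over pent_side a.  For w = x u, the copy
   x G_(m-1) containing w lies at position r = x - a (mod 5) relative to that side,
   g c = pent_pot c u, and K = 2^|u| - 1 bounds the distance between two non-adjacent sides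
   of a copy.  The copies r = 0, 1 meet the side; a path from any other copy must leave it
   through a side facing a neighbouring copy, and the constants count the copies crossed
   and the gluing edges used on the way. *)
definition pent_pot_step :: "nat \<Rightarrow> nat \<Rightarrow> nat \<Rightarrow> (nat \<Rightarrow> nat) \<Rightarrow> nat" where
  "pent_pot_step K a r g =
    (if r = 0 then min (g a) (min (g ((a + 1) mod 5)) (K + g ((a + 3) mod 5)))
     else if r = 1 then min (g a) (min (K + g ((a + 2) mod 5)) (g ((a + 4) mod 5)))
     else if r = 2 then min (2 * K + 1 + g ((a + 3) mod 5)) (K + 1 + g a)
     else if r = 3 then min (2 * K + 2 + g ((a + 4) mod 5)) (2 * K + 2 + g ((a + 1) mod 5))
     else min (K + 1 + g a) (2 * K + 1 + g ((a + 2) mod 5)))"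

fun pent_pot :: "nat \<Rightarrow> nat list \<Rightarrow> nat" where
  "pent_pot a [] = 0"
| "pent_pot a (x # u) = pent_pot_step (2 ^ length u - 1) a ((x + 5 - a) mod 5) (\<lambda>c. pent_pot c u)"

lemma pent_pot_step_mono:
  assumes "a < 5" and "\<And>c. c < 5 \<Longrightarrow> g1 c \<le> Suc (g2 c)"
  shows "pent_pot_step K a r g1 \<le> Suc (pent_pot_step K a r g2)"
proof -
  have "g1 ((a + i) mod 5) \<le> Suc (g2 ((a + i) mod 5))" for i
    using assms(2) by simp
  from this[of 0] this[of 1] this[of 2] this[of 3] this[of 4] show ?thesis
    using \<open>a < 5\<close> unfolding pent_pot_step_def by (simp add: min_def)
qed

lemma pent_pot_step_zero:
  assumes "a < 5" "x \<in> pent_side a" "g a = 0"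
  shows "pent_pot_step K a ((x + 5 - a) mod 5) g = 0"
proof -
  have "(x + 5 - a) mod 5 = 0 \<or> (x + 5 - a) mod 5 = 1"
    using assms(1,2) by (elim less_5_cases) (auto simp: pent_side_def)
  then show ?thesis
    using assms(3) unfolding pent_pot_step_def by auto
qed

lemma pent_pot_step_far:
  assumes a: "a < 5" and c: "c < 5" and "pent_far a c" and x: "x \<in> pent_side c"
    and g: "\<And>c'. c' < 5 \<Longrightarrow> pent_far c' c \<Longrightarrow> K \<le> g c'"
  shows "2 * K + 1 \<le> pent_pot_step K a ((x + 5 - a) mod 5) g"
proof -
  have "pent_far i c \<Longrightarrow> K \<le> g i" if "i < 5" for i
    using g that by blast
  note gi = this[of 0] this[of 1] this[of 2] this[of 3] this[of 4]
  have "x = c mod 5 \<or> x = Suc c mod 5"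
    using x by (auto simp: pent_side_def)
  with \<open>pent_far a c\<close> gi show ?thesis
    by (cases rule: less_5_cases[OF a]; cases rule: less_5_cases[OF c];
        simp add: pent_far_def pent_pot_step_def; elim disjE; simp)
qed

lemma pent_pot_step_glue:
  assumes x: "x < 5" and a: "a < 5"
    and z1: "g1 (Suc x mod 5) = 0"
    and f1: "\<And>c. c < 5 \<Longrightarrow> pent_far c (Suc x mod 5) \<Longrightarrow> K \<le> g1 c"
    and z2: "g2 ((x + 4) mod 5) = 0"
    and f2: "\<And>c. c < 5 \<Longrightarrow> pent_far c ((x + 4) mod 5) \<Longrightarrow> K \<le> g2 c"
  shows "pent_pot_step K a ((x + 5 - a) mod 5) g1
           \<le> Suc (pent_pot_step K a ((Suc x mod 5 + 5 - a) mod 5) g2)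
      \<and> pent_pot_step K a ((Suc x mod 5 + 5 - a) mod 5) g2
           \<le> Suc (pent_pot_step K a ((x + 5 - a) mod 5) g1)"
proof -
  have "pent_far i (Suc x mod 5) \<Longrightarrow> K \<le> g1 i" "pent_far i ((x + 4) mod 5) \<Longrightarrow> K \<le> g2 i"
    if "i < 5" for i
    using f1 f2 that by blast+
  note h = this[of 0] this[of 1] this[of 2] this[of 3] this[of 4]
  show ?thesis
    using h z1 z2
    by (cases rule: less_5_cases[OF a]; cases rule: less_5_cases[OF x];
        simp add: pent_far_def pent_pot_step_def; simp add: numeral_2_eq_2 min_def)
qed

lemma pent_pot_side_zero:
  "set w \<subseteq> pent_side a \<Longrightarrow> a < 5 \<Longrightarrow> pent_pot a w = 0"
proof (induction w arbitrary: a)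
  case (Cons x u)
  then show ?case
    using pent_pot_step_zero by simp
qed simp

lemma pent_pot_far_side:
  "set w \<subseteq> pent_side c \<Longrightarrow> a < 5 \<Longrightarrow> c < 5 \<Longrightarrow> pent_far a c \<Longrightarrow>
    2 ^ length w - 1 \<le> pent_pot a w"
proof (induction w arbitrary: a)
  case (Cons x u)
  have x: "x \<in> pent_side c" and u: "set u \<subseteq> pent_side c"
    using Cons.prems(1) by simp_all
  have "(1::nat) \<le> 2 ^ length u"
    by simp
  then have "(2::nat) ^ length (x # u) - 1 = 2 * (2 ^ length u - 1) + 1"
    unfolding length_Cons power_Suc by arith
  also have "\<dots> \<le> pent_pot a (x # u)"
    using pent_pot_step_far[OF Cons.prems(2-4) x, of "2 ^ length u - 1" "\<lambda>c. pent_pot c u"]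
      Cons.IH[OF u _ Cons.prems(3)] by simp
  finally show ?case .
qed simp

lemma pent_E_step: "(x, y) \<in> pent_E \<Longrightarrow> x < 5 \<and> y = Suc x mod 5"
  by (auto simp: pent_E_def)

lemma pent_I_sides:
  assumes "x < 5" "(a, b) \<in> pent_I x"
  shows "a \<in> pent_side (Suc x mod 5) \<and> b \<in> pent_side ((x + 4) mod 5)"
  using assms(2) by (cases rule: less_5_cases[OF assms(1)]) (auto simp: pent_I_def pent_side_def)

lemma pent_pot_igs_edge:
  "(w, v, t) \<in> igs_edges pent_S pent_E pent_typ pent_I m \<Longrightarrow> a < 5 \<Longrightarrow>
    pent_pot a w \<le> Suc (pent_pot a v) \<and> pent_pot a v \<le> Suc (pent_pot a w)"
proof (induction m arbitrary: w v t a)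
  case (Suc m)
  from Suc.prems(1) show ?case
  proof (cases rule: igs_edges_SucE)
    case (copy x u u')
    have "length u = length u'"
      using igs_edges_length[OF copy(3)] by simp
    moreover have "pent_pot c u \<le> Suc (pent_pot c u')" "pent_pot c u' \<le> Suc (pent_pot c u)"
      if "c < 5" for c
      using Suc.IH[OF copy(3) that] by simp_all
    ultimately show ?thesis
      using copy(1,2) pent_pot_step_mono[OF Suc.prems(2)] by simp
  next
    case (glue x y q q')
    have x: "x < 5" and y: "y = Suc x mod 5" and t: "t = x"
      using pent_E_step[OF glue(3)] glue(4) by (simp_all add: pent_typ_def)
    have len: "length q' = length q"
      using glue(5) by (simp add: list_all2_lengthD)
    have "set q \<subseteq> pent_side (Suc x mod 5) \<and> set q' \<subseteq> pent_side ((x + 4) mod 5)"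
      using glue(5) by (induction rule: list_all2_induct) (use pent_I_sides[OF x] t in auto)
    then have q: "set q \<subseteq> pent_side (Suc x mod 5)"
      and q': "set q' \<subseteq> pent_side ((x + 4) mod 5)"
      by simp_all
    let ?K = "2 ^ length q - 1" and ?r = "(x + 5 - a) mod 5" and ?r' = "(Suc x mod 5 + 5 - a) mod 5"
    have "pent_pot_step ?K a ?r (\<lambda>c. pent_pot c q) \<le> Suc (pent_pot_step ?K a ?r' (\<lambda>c. pent_pot c q'))
        \<and> pent_pot_step ?K a ?r' (\<lambda>c. pent_pot c q') \<le> Suc (pent_pot_step ?K a ?r (\<lambda>c. pent_pot c q))"
    proof (rule pent_pot_step_glue[OF x Suc.prems(2)])
      show "pent_pot (Suc x mod 5) q = 0" "pent_pot ((x + 4) mod 5) q' = 0"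
        using pent_pot_side_zero q q' by simp_all
      show "2 ^ length q - 1 \<le> pent_pot c q" if "c < 5" "pent_far c (Suc x mod 5)" for c
        using pent_pot_far_side[OF q that(1) _ that(2)] by simp
      show "2 ^ length q - 1 \<le> pent_pot c q'" if "c < 5" "pent_far c ((x + 4) mod 5)" for c
        using pent_pot_far_side[OF q' that(1) _ that(2)] len by simp
    qed
    with len show ?thesis
      unfolding glue(1,2) y by simp
  qed
qed simp

lemma pent_gluing_setdist_ge:
  assumes "t \<in> pent_typ ` pent_E"
  shows "enat (2 ^ m - 1) \<le> graph_setdist (words pent_S m)
    (igs_graph_edges pent_S pent_E pent_typ pent_I m)
    (words (gluing_minus pent_I t) m) (words (gluing_plus pent_I t) m)"
proof -
  have t: "t < 5"
    using assms by (auto simp: pent_E_def pent_typ_def)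
  define a where "a = (t + 4) mod 5"
  have minus: "gluing_minus pent_I t = pent_side a"
    unfolding a_def
    by (cases rule: less_5_cases[OF t]) (auto simp: gluing_minus_def pent_I_def pent_side_def)
  have plus: "gluing_plus pent_I t = pent_side (Suc t mod 5)"
    by (cases rule: less_5_cases[OF t]) (auto simp: gluing_plus_def pent_I_def pent_side_def)
  have "a < 5" "pent_far a (Suc t mod 5)"
    unfolding a_def by (cases rule: less_5_cases[OF t]; simp add: pent_far_def)+
  show ?thesis
  proof (rule graph_setdist_ge_by_lipschitz[where f = "\<lambda>w. int (pent_pot a w)"])
    fix w v assume "(w, v) \<in> igs_graph_edges pent_S pent_E pent_typ pent_I m"
    then obtain t' where "(w, v, t') \<in> igs_edges pent_S pent_E pent_typ pent_I m"
      by (auto simp: igs_graph_edges_def)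
    from pent_pot_igs_edge[OF this \<open>a < 5\<close>]
    show "\<bar>int (pent_pot a w) - int (pent_pot a v)\<bar> \<le> 1"
      by linarith
  next
    fix u u' assume "u \<in> words (gluing_minus pent_I t) m" "u' \<in> words (gluing_plus pent_I t) m"
    then have "pent_pot a u = 0" "2 ^ m - 1 \<le> pent_pot a u'"
      using \<open>a < 5\<close> \<open>pent_far a (Suc t mod 5)\<close> t minus plus
      by (auto simp: words_def intro: pent_pot_side_zero dest: pent_pot_far_side)
    then show "int (2 ^ m - 1) \<le> \<bar>int (pent_pot a u) - int (pent_pot a u')\<bar>"
      by linarith
  qed
qed

theorem proposition5p20:
  shows
  "(\<forall>d L s (S :: csym set) E typ I. cubical_IGS d L s S E typ I \<longrightarrow>
      (\<forall>t\<in>typ ` E. \<forall>m::nat. m \<ge> 1 \<longrightarrow>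
         ereal (real L ^ m / 2) \<le>
         ereal_of_enat (graph_setdist (words S m) (igs_graph_edges S E typ I m)
            (words (gluing_minus I t) m) (words (gluing_plus I t) m))))
   \<and> (\<forall>t\<in>gasket_typ ` gasket_E. \<forall>m::nat. m \<ge> 1 \<longrightarrow>
         ereal (real 2 ^ m / 2) \<le>
         ereal_of_enat (graph_setdist (words gasket_S m)
            (igs_graph_edges gasket_S gasket_E gasket_typ gasket_I m)
            (words (gluing_minus gasket_I t) m) (words (gluing_plus gasket_I t) m)))
   \<and> (\<forall>t\<in>pent_typ ` pent_E. \<forall>m::nat. m \<ge> 1 \<longrightarrow>
         ereal (real 2 ^ m / 2) \<le>
         ereal_of_enat (graph_setdist (words pent_S m)
            (igs_graph_edges pent_S pent_E pent_typ pent_I m)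
            (words (gluing_minus pent_I t) m) (words (gluing_plus pent_I t) m)))"
proof (intro conjI allI impI ballI)
  fix d L s S E tp I t and m :: nat
  assume cub: "cubical_IGS d L s S E tp I" and t: "t \<in> tp ` E" and m: "1 \<le> m"
  have "2 \<le> L"
    using cub by (simp add: cubical_IGS_def)
  show "ereal (real L ^ m / 2) \<le> ereal_of_enat (graph_setdist (words S m)
      (igs_graph_edges S E tp I m) (words (gluing_minus I t) m) (words (gluing_plus I t) m))"
    by (rule ereal_half_power_le[OF cubical_IGS_gluing_setdist_ge[OF cub t] \<open>2 \<le> L\<close> m])
next
  fix t and m :: nat
  assume "t \<in> gasket_typ ` gasket_E" "1 \<le> m"
  then show "ereal (real 2 ^ m / 2) \<le> ereal_of_enat (graph_setdist (words gasket_S m)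
      (igs_graph_edges gasket_S gasket_E gasket_typ gasket_I m)
      (words (gluing_minus gasket_I t) m) (words (gluing_plus gasket_I t) m))"
    by (intro ereal_half_power_le gasket_gluing_setdist_ge) auto
next
  fix t and m :: nat
  assume "t \<in> pent_typ ` pent_E" "1 \<le> m"
  then show "ereal (real 2 ^ m / 2) \<le> ereal_of_enat (graph_setdist (words pent_S m)
      (igs_graph_edges pent_S pent_E pent_typ pent_I m)
      (words (gluing_minus pent_I t) m) (words (gluing_plus pent_I t) m))"
    by (intro ereal_half_power_le pent_gluing_setdist_ge) auto
qed

end
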